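(* Let $\{\boldsymbol{Y}_n\}=\{(X_{1,n},X_{2,n},J_n)\}$ be a two-dimensional skip-free Markov modulated random walk as described in the context, which is irreducible and aperiodic. If $a_1<0$ or $a_2<0$, then for every $\boldsymbol{y}\in\mathbb{S}_+$ the occupation measure $(\tilde q_{\boldsymbol{y},\boldsymbol{y}'};\boldsymbol{y}'\in\mathbb{S}_+)$ is finite, i.e. $$\sum_{\boldsymbol{y}'\in\mathbb{S}_+}\tilde q_{\boldsymbol{y},\boldsymbol{y}'}=\mathbb{E}(\tau\mid \boldsymbol{Y}_0=\boldsymbol{y})<\infty .$$
   Context: Let $S_0=\{1,\dots,s_0\}$ be a finite set. The process $\{\boldsymbol{Y}_n\}=\{(X_{1,n},X_{2,n},J_n)\}$ is a discrete-time Markov chain on $\mathbb{S}=\mathbb{Z}^2\times S_0$ with space-homogeneous skip-free transitions: there are nonnegative $s_0\times s_0$ matrices $A_{k,l}$, $k,l\in\{-1,0,1\}$, with $\sum_{k,l}A_{k,l}$ stochastic, such that $\mathbb{P}(\boldsymbol{Y}_{n+1}=(x_1+k,x_2+l,j')\mid\boldsymbol{Y}_n=(x_1,x_2,j))=[A_{k,l}]_{j,j'}$ for all $(x_1,x_2)\in\mathbb{Z}^2$, $k,l\in\{-1,0,1\}$, $j,j'\in S_0$ (all other transitions have probability $0$). Let $\mathbb{Z}_+$ be the nonnegative integers, $\mathbb{S}_+=\mathbb{Z}_+^2\times S_0$, $\tau=\inf\{n\ge 0:\boldsymbol{Y}_n\in\mathbb{S}\setminus\mathbb{S}_+\}$,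 and for $\boldsymbol{y},\boldsymbol{y}'\in\mathbb{S}_+$, $\tilde q_{\boldsymbol{y},\boldsymbol{y}'}=\mathbb{E}\big(\sum_{n=0}^{\tau-1}1(\boldsymbol{Y}_n=\boldsymbol{y}')\mid\boldsymbol{Y}_0=\boldsymbol{y}\big)$. Let $A_{*,*}=\sum_{k,l}A_{k,l}$ (the transition matrix of the background process), $\boldsymbol{\pi}_{*,*}$ its stationary distribution, $A_{i,*}=\sum_{k}A_{i,k}$, $A_{*,j}=\sum_k A_{k,j}$, and define $a_1=\boldsymbol{\pi}_{*,*}(-A_{-1,*}+A_{1,*})\mathbf{1}$, $a_2=\boldsymbol{\pi}_{*,*}(-A_{*,-1}+A_{*,1})\mathbf{1}$, where $\mathbf 1$ is the all-ones column vector. *)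

theory Defs
  imports "HOL-Analysis.Analysis"
begin

text \<open>States of the Markov modulated random walk: (x1, x2, j) with x1, x2 integers
  and background phase j in S0 = {1..s0}.  The transition matrices are encoded as
  A :: int => int => nat => nat => real, where A k l j j' is the (j,j') entry of A_{k,l}.\<close>

type_synonym state = "int \<times> int \<times> nat"

definition S_all :: "nat \<Rightarrow> state set" where
  "S_all s0 = {(x1, x2, j). j \<in> {1..s0}}"

definition S_plus :: "nat \<Rightarrow> state set" where
  "S_plus s0 = {(x1, x2, j). 0 \<le> x1 \<and> 0 \<le> x2 \<and> j \<in> {1..s0}}"

definition trans :: "nat \<Rightarrow> (int \<Rightarrow> int \<Rightarrow> nat \<Rightarrow> nat \<Rightarrow> real) \<Rightarrow> state \<Rightarrow> state \<Rightarrow> real" where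
  "trans s0 A y y' = (case y of (x1, x2, j) \<Rightarrow> case y' of (x1', x2', j') \<Rightarrow>
     (if \<bar>x1' - x1\<bar> \<le> 1 \<and> \<bar>x2' - x2\<bar> \<le> 1 \<and> j \<in> {1..s0} \<and> j' \<in> {1..s0}
      then A (x1' - x1) (x2' - x2) j j' else 0))"

definition nbrs :: "nat \<Rightarrow> state \<Rightarrow> state set" where
  "nbrs s0 y = (case y of (x1, x2, j) \<Rightarrow>
     {(x1 + k, x2 + l, j') | k l j'. k \<in> {-1, 0, 1} \<and> l \<in> {-1, 0, 1} \<and> j' \<in> {1..s0}})"

fun nstep :: "nat \<Rightarrow> (int \<Rightarrow> int \<Rightarrow> nat \<Rightarrow> nat \<Rightarrow> real) \<Rightarrow> nat \<Rightarrow> state \<Rightarrow> state \<Rightarrow> real" where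
  "nstep s0 A 0 y y' = (if y = y' then 1 else 0)"
| "nstep s0 A (Suc n) y y' = (\<Sum>z\<in>nbrs s0 y. trans s0 A y z * nstep s0 A n z y')"

text \<open>Taboo n-step probabilities P(Y_1,...,Y_n in S_+, Y_n = y' | Y_0 = y), for y in S_+,
  i.e. P(Y_n = y', tau > n | Y_0 = y).\<close>
fun taboo :: "nat \<Rightarrow> (int \<Rightarrow> int \<Rightarrow> nat \<Rightarrow> nat \<Rightarrow> real) \<Rightarrow> nat \<Rightarrow> state \<Rightarrow> state \<Rightarrow> real" where
  "taboo s0 A 0 y y' = (if y = y' then 1 else 0)"
| "taboo s0 A (Suc n) y y' = (\<Sum>z\<in>nbrs s0 y \<inter> S_plus s0. trans s0 A y z * taboo s0 A n z y')"

text \<open>Occupation measure q~_{y,y'} = E(sum_{n<tau} 1(Y_n = y') | Y_0 = y)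
  = sum_n P(Y_n = y', tau > n | Y_0 = y)  (valued in [0, \<infinity>]).\<close>
definition qtilde :: "nat \<Rightarrow> (int \<Rightarrow> int \<Rightarrow> nat \<Rightarrow> nat \<Rightarrow> real) \<Rightarrow> state \<Rightarrow> state \<Rightarrow> ennreal" where
  "qtilde s0 A y y' = (\<Sum>n. ennreal (taboo s0 A n y y'))"

definition irreducible_chain :: "nat \<Rightarrow> (int \<Rightarrow> int \<Rightarrow> nat \<Rightarrow> nat \<Rightarrow> real) \<Rightarrow> bool" where
  "irreducible_chain s0 A \<longleftrightarrow>
     (\<forall>y\<in>S_all s0. \<forall>y'\<in>S_all s0. \<exists>n. nstep s0 A n y y' > 0)"

definition aperiodic_chain :: "nat \<Rightarrow> (int \<Rightarrow> int \<Rightarrow> nat \<Rightarrow> nat \<Rightarrow> real) \<Rightarrow> bool" where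
  "aperiodic_chain s0 A \<longleftrightarrow>
     (\<forall>y\<in>S_all s0. Gcd {n. 0 < n \<and> nstep s0 A n y y > 0} = 1)"

definition Astar :: "(int \<Rightarrow> int \<Rightarrow> nat \<Rightarrow> nat \<Rightarrow> real) \<Rightarrow> nat \<Rightarrow> nat \<Rightarrow> real" where
  "Astar A j j' = (\<Sum>k\<in>{-1,0,1}. \<Sum>l\<in>{-1,0,1}. A k l j j')"

definition drift1 :: "nat \<Rightarrow> (int \<Rightarrow> int \<Rightarrow> nat \<Rightarrow> nat \<Rightarrow> real) \<Rightarrow> (nat \<Rightarrow> real) \<Rightarrow> real" where
  "drift1 s0 A \<pi> = (\<Sum>j\<in>{1..s0}. \<pi> j * (\<Sum>j'\<in>{1..s0}. \<Sum>l\<in>{-1,0,1}. A 1 l j j' - A (-1) l j j'))"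

definition drift2 :: "nat \<Rightarrow> (int \<Rightarrow> int \<Rightarrow> nat \<Rightarrow> nat \<Rightarrow> real) \<Rightarrow> (nat \<Rightarrow> real) \<Rightarrow> real" where
  "drift2 s0 A \<pi> = (\<Sum>j\<in>{1..s0}. \<pi> j * (\<Sum>j'\<in>{1..s0}. \<Sum>k\<in>{-1,0,1}. A k 1 j j' - A k (-1) j j'))"

end

theory Submission
  imports Defs
begin

text \<open>
  A Foster-Lyapunov argument. Suppose a_1 < 0 (the case a_2 < 0 is symmetric) and let d(j) be
  the mean increment of X_1 in one step from phase j, so that a_1 is the \<pi>-average of d. If
  h solves the Poisson equation h - A_{*,*} h = d - a_1 up to an error -a_1/2, then f(x_1, x_2,
  j) = x_1 + h(j) + c decreases in expectation by at least -a_1/2 at every step taken inside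
  S_+, which gives E(\<tau> | Y_0 = y) \<le> 2 f(y) / (-a_1). An approximate solution h is a
  Cesaro mean of the partial sums of \<Sum>_n A_{*,*}^n (d - a_1); its error is small because a
  mean-zero function that is nearly invariant under an irreducible stochastic matrix is nearly
  zero. Irreducibility of the background chain is inherited from the walk.
\<close>

lemma trans_nonneg:
  assumes "\<And>k l j j'. k \<in> {-1,0,1} \<Longrightarrow> l \<in> {-1,0,1} \<Longrightarrow> j \<in> {1..s0} \<Longrightarrow>
             j' \<in> {1..s0} \<Longrightarrow> 0 \<le> A k l j j'"
  shows "0 \<le> trans s0 A y z"
proof (cases y, cases z)
  fix x1 x2 j x1' x2' j'
  assume yz: "y = (x1, x2, j)" "z = (x1', x2', j')"
  have unit: "\<bar>a\<bar> \<le> 1 \<Longrightarrow> a \<in> {-1,0,1}" for a :: int by auto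
  show ?thesis
    using assms[of "x1' - x1" "x2' - x2" j j'] unit[of "x1' - x1"] unit[of "x2' - x2"]
    by (auto simp: trans_def yz)
qed

lemma nbrs_eq:
  "nbrs s0 (x1, x2, j) = (\<lambda>(k, l, j'). (x1 + k, x2 + l, j')) ` ({-1,0,1} \<times> {-1,0,1} \<times> {1..s0})"
  unfolding nbrs_def by (auto simp: image_iff)

lemma finite_nbrs: "finite (nbrs s0 y)"
  by (cases y) (simp add: nbrs_eq)

lemma sum_nbrs_trans:
  assumes j: "j \<in> {1..s0}"
  shows "(\<Sum>z\<in>nbrs s0 (x1, x2, j). trans s0 A (x1, x2, j) z * F z) =
    (\<Sum>k\<in>{-1,0,1}. \<Sum>l\<in>{-1,0,1}. \<Sum>j'\<in>{1..s0}. A k l j j' * F (x1 + k, x2 + l, j'))"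
proof -
  let ?D = "{-1,0,1::int} \<times> {-1,0,1::int} \<times> {1..s0}"
  have inj: "inj_on (\<lambda>(k, l, j'). (x1 + k, x2 + l, j')) ?D"
    by (auto simp: inj_on_def)
  have trans_step: "trans s0 A (x1, x2, j) (x1 + k, x2 + l, j') = A k l j j'" if "(k, l, j') \<in> ?D" for k l j'
    using that j by (auto simp: trans_def)
  have "(\<Sum>z\<in>nbrs s0 (x1, x2, j). trans s0 A (x1, x2, j) z * F z) =
      (\<Sum>(k, l, j')\<in>?D. A k l j j' * F (x1 + k, x2 + l, j'))"
    unfolding nbrs_eq sum.reindex[OF inj]
  proof (rule sum.cong[OF refl])
    fix x assume "x \<in> ?D"
    then show "((\<lambda>z. trans s0 A (x1, x2, j) z * F z) \<circ> (\<lambda>(k, l, j'). (x1 + k, x2 + l, j'))) x =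
        (case x of (k, l, j') \<Rightarrow> A k l j j' * F (x1 + k, x2 + l, j'))"
      by (cases x) (simp only: trans_step comp_apply prod.case)
  qed
  then show ?thesis
    by (simp add: sum.cartesian_product)
qed

lemma sum_A_eq_Astar:
  "(\<Sum>k\<in>{-1,0,1}. \<Sum>l\<in>{-1,0,1}. \<Sum>j'\<in>{1..s0}. A k l j j' * X j') = (\<Sum>j'\<in>{1..s0}. Astar A j j' * X j')"
  unfolding Astar_def sum_distrib_right by (simp add: sum.distrib)

lemma taboo_nonneg:
  assumes "\<And>y z. 0 \<le> trans s0 A y z"
  shows "0 \<le> taboo s0 A n y y'"
  using assms by (induction n arbitrary: y) (auto intro!: sum_nonneg)

lemma taboo_occupation_le_Lyapunov:
  assumes trans_nonneg: "\<And>y z. 0 \<le> trans s0 A y z"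
    and eps: "0 < \<epsilon>" and F: "finite F"
    and f_nonneg: "\<And>y. y \<in> S_plus s0 \<Longrightarrow> 0 \<le> f y"
    and f_drift: "\<And>y. y \<in> S_plus s0 \<Longrightarrow> \<epsilon> + (\<Sum>z\<in>nbrs s0 y \<inter> S_plus s0. trans s0 A y z * f z) \<le> f y"
    and y: "y \<in> S_plus s0"
  shows "\<epsilon> * (\<Sum>n<N. \<Sum>y'\<in>F. taboo s0 A n y y') \<le> f y"
  using y
proof (induction N arbitrary: y)
  case 0
  then show ?case using f_nonneg by simp
next
  case (Suc N)
  let ?Z = "nbrs s0 y \<inter> S_plus s0"
  let ?T = "\<lambda>z. \<Sum>n<N. \<Sum>y'\<in>F. taboo s0 A n z y'"
  have "(\<Sum>n<Suc N. \<Sum>y'\<in>F. taboo s0 A n y y') =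
      (\<Sum>y'\<in>F. taboo s0 A 0 y y') + (\<Sum>n<N. \<Sum>y'\<in>F. taboo s0 A (Suc n) y y')"
    by (rule sum.lessThan_Suc_shift)
  also have "(\<Sum>y'\<in>F. taboo s0 A 0 y y') \<le> 1"
    using F by (simp add: sum.delta)
  also have "(\<Sum>n<N. \<Sum>y'\<in>F. taboo s0 A (Suc n) y y') = (\<Sum>z\<in>?Z. trans s0 A y z * ?T z)"
    by (simp add: sum_distrib_left sum.swap[of _ ?Z])
  finally have "\<epsilon> * (\<Sum>n<Suc N. \<Sum>y'\<in>F. taboo s0 A n y y') \<le>
      \<epsilon> * (1 + (\<Sum>z\<in>?Z. trans s0 A y z * ?T z))"
    using eps by (simp add: mult_left_mono)
  also have "\<dots> = \<epsilon> + (\<Sum>z\<in>?Z. trans s0 A y z * (\<epsilon> * ?T z))"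
    by (simp add: distrib_left sum_distrib_left mult.left_commute)
  also have "\<dots> \<le> \<epsilon> + (\<Sum>z\<in>?Z. trans s0 A y z * f z)"
    using Suc.IH by (intro add_left_mono sum_mono mult_left_mono trans_nonneg) auto
  also have "\<dots> \<le> f y"
    using f_drift[OF Suc.prems] .
  finally show ?case .
qed

lemma occupation_measure_le_Lyapunov:
  assumes trans_nonneg: "\<And>y z. 0 \<le> trans s0 A y z"
    and eps: "0 < \<epsilon>"
    and f_nonneg: "\<And>y. y \<in> S_plus s0 \<Longrightarrow> 0 \<le> f y"
    and f_drift: "\<And>y. y \<in> S_plus s0 \<Longrightarrow> \<epsilon> + (\<Sum>z\<in>nbrs s0 y \<inter> S_plus s0. trans s0 A y z * f z) \<le> f y"
    and y: "y \<in> S_plus s0"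
  shows "(\<Sum>\<^sub>\<infinity>y'\<in>S_plus s0. qtilde s0 A y y') \<le> ennreal (f y / \<epsilon>)"
proof -
  have "sum (qtilde s0 A y) F \<le> ennreal (f y / \<epsilon>)" if F: "finite F" for F
  proof -
    have "sum (qtilde s0 A y) F = (\<Sum>n. \<Sum>y'\<in>F. ennreal (taboo s0 A n y y'))"
      unfolding qtilde_def by (rule suminf_sum[symmetric]) simp
    also have "\<dots> \<le> ennreal (f y / \<epsilon>)"
    proof (rule suminf_le_const)
      fix N
      have "\<epsilon> * (\<Sum>n<N. \<Sum>y'\<in>F. taboo s0 A n y y') \<le> f y"
        by (rule taboo_occupation_le_Lyapunov[OF trans_nonneg eps F f_nonneg f_drift y])
      then have "(\<Sum>n<N. \<Sum>y'\<in>F. taboo s0 A n y y') \<le> f y / \<epsilon>"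
        using eps by (simp add: field_simps)
      then show "(\<Sum>n<N. \<Sum>y'\<in>F. ennreal (taboo s0 A n y y')) \<le> ennreal (f y / \<epsilon>)"
        using taboo_nonneg[OF trans_nonneg] by (simp add: sum_nonneg ennreal_leI)
    qed simp
    finally show ?thesis .
  qed
  then show ?thesis
    by (subst nonneg_infsum_complete) (auto intro: SUP_least)
qed

definition kernel_apply ::
  "'a set \<Rightarrow> ('a \<Rightarrow> 'a \<Rightarrow> real) \<Rightarrow> ('a \<Rightarrow> real) \<Rightarrow> 'a \<Rightarrow> real" where
  "kernel_apply R Q v j = (\<Sum>i\<in>R. Q j i * v i)"

lemma kernel_apply_cong:
  "(\<And>i. i \<in> R \<Longrightarrow> v i = w i) \<Longrightarrow> kernel_apply R Q v j = kernel_apply R Q w j"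
  unfolding kernel_apply_def by (intro sum.cong) auto

lemma kernel_apply_add:
  "kernel_apply R Q (\<lambda>i. v i + w i) j = kernel_apply R Q v j + kernel_apply R Q w j"
  unfolding kernel_apply_def by (simp add: distrib_left sum.distrib)

lemma kernel_apply_cmult:
  "kernel_apply R Q (\<lambda>i. c * v i) j = c * kernel_apply R Q v j"
  unfolding kernel_apply_def by (simp add: sum_distrib_left mult.left_commute)

lemma kernel_apply_sum:
  "kernel_apply R Q (\<lambda>i. \<Sum>t\<in>T. v t i) j = (\<Sum>t\<in>T. kernel_apply R Q (v t) j)"
  unfolding kernel_apply_def by (simp add: sum_distrib_left sum.swap[of _ T])

locale stationary_stochastic_matrix =
  fixes R :: "'a set" and Q :: "'a \<Rightarrow> 'a \<Rightarrow> real" and \<pi> :: "'a \<Rightarrow> real"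
  assumes finite_R: "finite R"
    and Q_nonneg: "\<And>j i. j \<in> R \<Longrightarrow> i \<in> R \<Longrightarrow> 0 \<le> Q j i"
    and Q_row_sum: "\<And>j. j \<in> R \<Longrightarrow> (\<Sum>i\<in>R. Q j i) = 1"
    and pi_nonneg: "\<And>j. j \<in> R \<Longrightarrow> 0 \<le> \<pi> j"
    and pi_sum: "(\<Sum>j\<in>R. \<pi> j) = 1"
    and pi_stationary: "\<And>i. i \<in> R \<Longrightarrow> (\<Sum>j\<in>R. \<pi> j * Q j i) = \<pi> i"
begin

abbreviation P :: "('a \<Rightarrow> real) \<Rightarrow> 'a \<Rightarrow> real" where
  "P \<equiv> kernel_apply R Q"

lemma P_const: "j \<in> R \<Longrightarrow> P (\<lambda>_. c) j = c"
  unfolding kernel_apply_def using Q_row_sum by (simp flip: sum_distrib_right)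

lemma P_mono: "(\<And>i. i \<in> R \<Longrightarrow> v i \<le> w i) \<Longrightarrow> j \<in> R \<Longrightarrow> P v j \<le> P w j"
  unfolding kernel_apply_def by (intro sum_mono mult_left_mono Q_nonneg)

lemma pi_mean_P: "(\<Sum>j\<in>R. \<pi> j * P v j) = (\<Sum>j\<in>R. \<pi> j * v j)"
proof -
  have "(\<Sum>j\<in>R. \<pi> j * P v j) = (\<Sum>i\<in>R. (\<Sum>j\<in>R. \<pi> j * Q j i) * v i)"
    unfolding kernel_apply_def
    by (simp add: sum_distrib_left sum_distrib_right mult.assoc) (rule sum.swap)
  then show ?thesis
    using pi_stationary by simp
qed

lemma P_iter_affine: "j \<in> R \<Longrightarrow> (P ^^ n) (\<lambda>i. c + a * v i) j = c + a * (P ^^ n) v j"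
proof (induction n arbitrary: j)
  case (Suc n)
  then have "(P ^^ Suc n) (\<lambda>i. c + a * v i) j = P (\<lambda>i. c + a * (P ^^ n) v i) j"
    by (auto intro: kernel_apply_cong)
  then show ?case
    using Suc.prems by (simp add: kernel_apply_add kernel_apply_cmult P_const)
qed simp

lemma P_iter_const: "j \<in> R \<Longrightarrow> (P ^^ n) (\<lambda>_. c) j = c"
  using P_iter_affine[where a = 0] by simp

lemma P_iter_mono: "(\<And>i. i \<in> R \<Longrightarrow> v i \<le> w i) \<Longrightarrow> j \<in> R \<Longrightarrow> (P ^^ n) v j \<le> (P ^^ n) w j"
  by (induction n arbitrary: j) (auto intro: P_mono)

lemma pi_mean_P_iter: "(\<Sum>j\<in>R. \<pi> j * (P ^^ n) v j) = (\<Sum>j\<in>R. \<pi> j * v j)"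
  by (induction n) (simp_all add: pi_mean_P)

lemma P_iter_drift_le:
  assumes drift: "\<And>i. i \<in> R \<Longrightarrow> P u i - u i \<le> \<eta>" and j: "j \<in> R"
  shows "(P ^^ n) u j - u j \<le> n * \<eta>"
  using j
proof (induction n arbitrary: j)
  case (Suc n)
  have "(P ^^ Suc n) u j \<le> P (\<lambda>i. u i + n * \<eta>) j"
    using Suc by (auto intro: P_mono simp: algebra_simps)
  also have "\<dots> = P u j + n * \<eta>"
    using Suc.prems by (simp add: kernel_apply_add P_const)
  finally show ?case
    using drift[OF Suc.prems] by (simp add: algebra_simps)
qed simp

end

locale irreducible_stochastic_matrix = stationary_stochastic_matrix +
  assumes irreducible: "\<And>j k. j \<in> R \<Longrightarrow> k \<in> R \<Longrightarrow> \<exists>n. 0 < (kernel_apply R Q ^^ n) (indicator {k}) j"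
begin

lemma uniform_reachability:
  obtains \<delta> N where "0 < \<delta>" and "\<And>j k. j \<in> R \<Longrightarrow> k \<in> R \<Longrightarrow> \<exists>n\<le>N. \<delta> \<le> (P ^^ n) (indicator {k}) j"
proof -
  have "\<forall>jk\<in>R \<times> R. \<exists>n. 0 < (P ^^ n) (indicator {snd jk}) (fst jk)"
    using irreducible by auto
  then obtain t where t: "\<forall>jk\<in>R \<times> R. 0 < (P ^^ t jk) (indicator {snd jk}) (fst jk)"
    by (metis bchoice)
  define p where "p jk = (P ^^ t jk) (indicator {snd jk}) (fst jk)" for jk
  have "R \<noteq> {}"
    using pi_sum by auto
  then have "0 < Min (p ` (R \<times> R))"
    using finite_R t by (simp add: p_def)
  moreover have "\<exists>n\<le>Max (t ` (R \<times> R)). Min (p ` (R \<times> R)) \<le> (P ^^ n) (indicator {k}) j"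
    if "j \<in> R" "k \<in> R" for j k
    using that finite_R
    by (intro exI[of _ "t (j, k)"] conjI Max_ge Min_le_iff[THEN iffD2])
      (auto simp: p_def intro!: bexI[of _ "(j, k)"])
  ultimately show thesis
    by (rule that)
qed


lemma mean_zero_le_drift_bound:
  obtains C where "\<And>u \<eta> k. (\<And>i. i \<in> R \<Longrightarrow> P u i - u i \<le> \<eta>) \<Longrightarrow> (\<Sum>j\<in>R. \<pi> j * u j) = 0 \<Longrightarrow>
    k \<in> R \<Longrightarrow> u k \<le> C * \<eta>"
proof -
  obtain \<delta> N where \<delta>: "0 < \<delta>"
    and reach: "\<And>j k. j \<in> R \<Longrightarrow> k \<in> R \<Longrightarrow> \<exists>n\<le>N. \<delta> \<le> (P ^^ n) (indicator {k}) j"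
    using uniform_reachability by metis
  have "u k \<le> N / \<delta> * \<eta>"
    if drift: "\<And>i. i \<in> R \<Longrightarrow> P u i - u i \<le> \<eta>" and mean: "(\<Sum>j\<in>R. \<pi> j * u j) = 0"
      and k: "k \<in> R" for u \<eta> k
  proof -
    define m where "m = Min (u ` R)"
    have m_le: "\<And>i. i \<in> R \<Longrightarrow> m \<le> u i"
      unfolding m_def using finite_R by simp
    have "m \<in> u ` R"
      unfolding m_def using finite_R k by (intro Min_in) auto
    then obtain j where j: "j \<in> R" "u j = m"
      by auto
    have "m = (\<Sum>i\<in>R. \<pi> i * m)"
      using pi_sum by (simp flip: sum_distrib_right)
    also have "\<dots> \<le> (\<Sum>i\<in>R. \<pi> i * u i)"
      using m_le pi_nonneg by (intro sum_mono mult_left_mono) auto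
    also have "\<dots> \<le> 0"
      using mean by simp
    finally have m_nonpos: "m \<le> 0" .
    have "0 = (\<Sum>i\<in>R. \<pi> i * (P u i - u i))"
      by (simp add: right_diff_distrib sum_subtractf pi_mean_P)
    also have "\<dots> \<le> (\<Sum>i\<in>R. \<pi> i * \<eta>)"
      using drift pi_nonneg by (intro sum_mono mult_left_mono) auto
    finally have \<eta>: "0 \<le> \<eta>"
      using pi_sum by (simp flip: sum_distrib_right)
    obtain n where "n \<le> N" and p: "\<delta> \<le> (P ^^ n) (indicator {k}) j"
      using reach[OF j(1) k] by blast
    \<comment> \<open>u dominates the function equal to u k at k and to its minimum m elsewhere\<close>
    have "m + (u k - m) * (P ^^ n) (indicator {k}) j = (P ^^ n) (\<lambda>i. m + (u k - m) * indicator {k} i) j"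
      using j by (simp add: P_iter_affine)
    also have "\<dots> \<le> (P ^^ n) u j"
      using m_le by (intro P_iter_mono j) (auto simp: indicator_def)
    also have "\<dots> \<le> m + N * \<eta>"
      using P_iter_drift_le[OF drift j(1), of n] \<open>n \<le> N\<close> \<eta> j(2) mult_right_mono[of n N \<eta>]
      by simp
    finally have "(u k - m) * (P ^^ n) (indicator {k}) j \<le> N * \<eta>"
      by simp
    moreover have "(u k - m) * \<delta> \<le> (u k - m) * (P ^^ n) (indicator {k}) j"
      using p m_le[OF k] by (simp add: mult_left_mono)
    moreover have "\<delta> * m \<le> 0"
      using \<delta> m_nonpos by (simp add: mult_nonneg_nonpos)
    ultimately have "u k * \<delta> \<le> N * \<eta>"
      by (simp add: algebra_simps)
    then show ?thesis
      using \<delta> by (simp add: field_simps)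
  qed
  then show thesis
    by (rule that)
qed

lemma approximate_poisson_solution:
  assumes g_mean: "(\<Sum>j\<in>R. \<pi> j * g j) = 0" and \<epsilon>: "0 < \<epsilon>"
  obtains h where "\<And>j. j \<in> R \<Longrightarrow> P h j - h j \<le> \<epsilon> - g j"
proof -
  obtain C where C: "\<And>u \<eta> k. (\<And>i. i \<in> R \<Longrightarrow> P u i - u i \<le> \<eta>) \<Longrightarrow> (\<Sum>j\<in>R. \<pi> j * u j) = 0 \<Longrightarrow>
      k \<in> R \<Longrightarrow> u k \<le> C * \<eta>"
    using mean_zero_le_drift_bound by metis
  define G where "G = (\<Sum>i\<in>R. \<bar>g i\<bar>)"
  have g_bound: "\<And>i. i \<in> R \<Longrightarrow> \<bar>g i\<bar> \<le> G"
    unfolding G_def using finite_R by (intro member_le_sum) auto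
  obtain n :: nat where "2 * C * G / \<epsilon> < n"
    using reals_Archimedean2 by blast
  define m where "m = Suc n"
  have m: "0 < m" and "2 * C * G / \<epsilon> < m"
    using \<open>2 * C * G / \<epsilon> < n\<close> by (simp_all add: m_def)
  then have Cm: "C * (2 * G / m) \<le> \<epsilon>"
    using \<epsilon> by (simp add: field_simps)
  \<comment> \<open>h - P h = g - u, where u is small since P u - u = O(1/m) and u has mean zero\<close>
  define S where "S k j = (\<Sum>n<k. (P ^^ n) g j)" for k j
  have S_step: "P (S k) j - S k j = (P ^^ k) g j - g j" for k j
  proof -
    have "P (S k) j = (\<Sum>n<k. (P ^^ Suc n) g j)"
      unfolding S_def kernel_apply_sum by simp
    then show ?thesis
      unfolding S_def using sum_lessThan_telescope[of "\<lambda>n. (P ^^ n) g j" k]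
      by (simp add: sum_subtractf)
  qed
  define u where "u j = 1 / m * S m j" for j
  have "P u i - u i \<le> 2 * G / m" if i: "i \<in> R" for i
  proof -
    have "(P ^^ m) g i \<le> G"
      using P_iter_mono[of g "\<lambda>_. G" i m] P_iter_const[OF i] g_bound i by (simp add: abs_le_iff)
    then have "(P ^^ m) g i - g i \<le> 2 * G"
      using g_bound[OF i] by linarith
    moreover have "P u i - u i = 1 / m * ((P ^^ m) g i - g i)"
      unfolding u_def kernel_apply_cmult S_step[symmetric] by (simp add: right_diff_distrib)
    ultimately show ?thesis
      using m by (simp add: divide_right_mono)
  qed
  moreover have "(\<Sum>j\<in>R. \<pi> j * u j) = 0"
  proof -
    have "(\<Sum>j\<in>R. \<pi> j * u j) = 1 / m * (\<Sum>n<m. \<Sum>j\<in>R. \<pi> j * (P ^^ n) g j)"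
      unfolding u_def S_def by (simp add: sum_distrib_left mult.left_commute) (rule sum.swap)
    then show ?thesis
      by (simp add: pi_mean_P_iter g_mean)
  qed
  ultimately have u_le: "\<And>j. j \<in> R \<Longrightarrow> u j \<le> \<epsilon>"
    using C Cm by (blast intro: order_trans)
  define h where "h j = 1 / m * (\<Sum>k<m. S k j)" for j
  have "P h j - h j = u j - g j" for j
  proof -
    have "P h j - h j = 1 / m * (\<Sum>k<m. (P ^^ k) g j - g j)"
      unfolding h_def kernel_apply_cmult kernel_apply_sum S_step[symmetric]
      by (simp add: right_diff_distrib sum_subtractf)
    also have "\<dots> = u j - g j"
      unfolding u_def S_def using m by (simp add: sum_subtractf field_simps)
    finally show ?thesis .
  qed
  then show thesis
    using u_le by (intro that[of h]) simp
qed

end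

definition mean_incr ::
  "nat \<Rightarrow> (int \<Rightarrow> int \<Rightarrow> nat \<Rightarrow> nat \<Rightarrow> real) \<Rightarrow> (int \<Rightarrow> int \<Rightarrow> int) \<Rightarrow> nat \<Rightarrow> real" where
  "mean_incr s0 A w j = (\<Sum>k\<in>{-1,0,1}. \<Sum>l\<in>{-1,0,1}. \<Sum>j'\<in>{1..s0}. A k l j j' * of_int (w k l))"

lemma drift1_eq_mean_incr: "drift1 s0 A \<pi> = (\<Sum>j\<in>{1..s0}. \<pi> j * mean_incr s0 A (\<lambda>k l. k) j)"
proof -
  have "(\<Sum>j'\<in>{1..s0}. \<Sum>l\<in>{-1,0,1}. A 1 l j j' - A (-1) l j j') = mean_incr s0 A (\<lambda>k l. k) j" for j
    unfolding mean_incr_def by (simp add: sum.distrib sum_subtractf sum_negf)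
  then show ?thesis
    unfolding drift1_def by simp
qed

lemma drift2_eq_mean_incr: "drift2 s0 A \<pi> = (\<Sum>j\<in>{1..s0}. \<pi> j * mean_incr s0 A (\<lambda>k l. l) j)"
proof -
  have "(\<Sum>j'\<in>{1..s0}. \<Sum>k\<in>{-1,0,1}. A k 1 j j' - A k (-1) j j') = mean_incr s0 A (\<lambda>k l. l) j" for j
    unfolding mean_incr_def by (simp add: sum.distrib sum_subtractf sum_negf)
  then show ?thesis
    unfolding drift2_def by simp
qed

locale modulated_walk =
  fixes s0 :: nat and A :: "int \<Rightarrow> int \<Rightarrow> nat \<Rightarrow> nat \<Rightarrow> real" and \<pi> :: "nat \<Rightarrow> real"
  assumes A_nonneg: "\<And>k l j j'. k \<in> {-1,0,1} \<Longrightarrow> l \<in> {-1,0,1} \<Longrightarrow> j \<in> {1..s0} \<Longrightarrow>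
                     j' \<in> {1..s0} \<Longrightarrow> 0 \<le> A k l j j'"
    and A_stoch: "\<And>j. j \<in> {1..s0} \<Longrightarrow> (\<Sum>j'\<in>{1..s0}. Astar A j j') = 1"
    and pi_nonneg: "\<And>j. j \<in> {1..s0} \<Longrightarrow> 0 \<le> \<pi> j"
    and pi_sum: "(\<Sum>j\<in>{1..s0}. \<pi> j) = 1"
    and pi_stat: "\<And>j'. j' \<in> {1..s0} \<Longrightarrow> (\<Sum>j\<in>{1..s0}. \<pi> j * Astar A j j') = \<pi> j'"
    and irred: "irreducible_chain s0 A"
begin

lemma nstep_le_background:
  "j \<in> {1..s0} \<Longrightarrow>
    nstep s0 A n (x1, x2, j) y' \<le> (kernel_apply {1..s0} (Astar A) ^^ n) (indicator {snd (snd y')}) j"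
proof (induction n arbitrary: x1 x2 j)
  case 0
  then show ?case by (cases y') auto
next
  case (Suc n)
  have "nstep s0 A (Suc n) (x1, x2, j) y' =
      (\<Sum>k\<in>{-1,0,1}. \<Sum>l\<in>{-1,0,1}. \<Sum>j'\<in>{1..s0}. A k l j j' * nstep s0 A n (x1 + k, x2 + l, j') y')"
    using sum_nbrs_trans[OF Suc.prems] by simp
  also have "\<dots> \<le> (\<Sum>k\<in>{-1,0,1}. \<Sum>l\<in>{-1,0,1}. \<Sum>j'\<in>{1..s0}.
      A k l j j' * (kernel_apply {1..s0} (Astar A) ^^ n) (indicator {snd (snd y')}) j')"
    using Suc by (intro sum_mono mult_left_mono A_nonneg) auto
  also have "\<dots> = kernel_apply {1..s0} (Astar A)
      ((kernel_apply {1..s0} (Astar A) ^^ n) (indicator {snd (snd y')})) j"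
    unfolding sum_A_eq_Astar kernel_apply_def ..
  finally show ?case
    by simp
qed

lemma background_irreducible:
  assumes "j \<in> {1..s0}" "k \<in> {1..s0}"
  shows "\<exists>n. 0 < (kernel_apply {1..s0} (Astar A) ^^ n) (indicator {k}) j"
proof -
  obtain n where "0 < nstep s0 A n (0, 0, j) (0, 0, k)"
    using irred assms unfolding irreducible_chain_def S_all_def by blast
  then have "0 < (kernel_apply {1..s0} (Astar A) ^^ n) (indicator {k}) j"
    using nstep_le_background[OF assms(1), of n 0 0 "(0, 0, k)"] by simp
  then show ?thesis
    by blast
qed

end

sublocale modulated_walk \<subseteq> irreducible_stochastic_matrix "{1..s0}" "Astar A" \<pi>
proof unfold_locales
  show "0 \<le> Astar A j i" if "j \<in> {1..s0}" "i \<in> {1..s0}" for j i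
    unfolding Astar_def using that by (intro sum_nonneg A_nonneg) auto
qed (use A_stoch pi_nonneg pi_sum pi_stat background_irreducible in auto)

context modulated_walk
begin

lemma sum_nbrs_level_phase:
  assumes level_shift: "\<And>x1 x2 j k l j'. level (x1 + k, x2 + l, j') = level (x1, x2, j) + w k l"
    and j: "j \<in> {1..s0}"
  shows "(\<Sum>z\<in>nbrs s0 (x1, x2, j). trans s0 A (x1, x2, j) z * (of_int (level z) + H (snd (snd z))))
      = of_int (level (x1, x2, j)) + mean_incr s0 A w j + P H j"
proof -
  let ?c = "of_int (level (x1, x2, j)) :: real"
  have "(\<Sum>z\<in>nbrs s0 (x1, x2, j). trans s0 A (x1, x2, j) z * (of_int (level z) + H (snd (snd z))))
      = (\<Sum>k\<in>{-1,0,1}. \<Sum>l\<in>{-1,0,1}. \<Sum>j'\<in>{1..s0}.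
          A k l j j' * ?c + A k l j j' * of_int (w k l) + A k l j j' * H j')"
    unfolding sum_nbrs_trans[OF j] level_shift[of x1 _ x2 _ _ j] by (simp add: algebra_simps)
  also have "\<dots> = (\<Sum>j'\<in>{1..s0}. Astar A j j' * ?c) + mean_incr s0 A w j + (\<Sum>j'\<in>{1..s0}. Astar A j j' * H j')"
    unfolding mean_incr_def sum_A_eq_Astar[symmetric] by (simp add: sum.distrib)
  also have "\<dots> = ?c + mean_incr s0 A w j + P H j"
    using A_stoch[OF j] by (simp add: kernel_apply_def flip: sum_distrib_right)
  finally show ?thesis .
qed

lemma occupation_measure_le_level_phase:
  fixes level :: "state \<Rightarrow> int" and w :: "int \<Rightarrow> int \<Rightarrow> int"
  assumes level_shift: "\<And>x1 x2 j k l j'. level (x1 + k, x2 + l, j') = level (x1, x2, j) + w k l"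
    and w_ge: "\<And>k l. k \<in> {-1,0,1} \<Longrightarrow> l \<in> {-1,0,1} \<Longrightarrow> -1 \<le> w k l"
    and level_nonneg: "\<And>y. y \<in> S_plus s0 \<Longrightarrow> 0 \<le> level y"
    and H_ge: "\<And>j. j \<in> {1..s0} \<Longrightarrow> 1 \<le> H j"
    and H_drift: "\<And>j. j \<in> {1..s0} \<Longrightarrow> mean_incr s0 A w j + (P H j - H j) \<le> - \<epsilon>"
    and \<epsilon>: "0 < \<epsilon>" and y: "y \<in> S_plus s0"
  shows "(\<Sum>\<^sub>\<infinity>y'\<in>S_plus s0. qtilde s0 A y y') \<le> ennreal ((of_int (level y) + H (snd (snd y))) / \<epsilon>)"
proof -
  define f where "f z = of_int (level z) + H (snd (snd z))" for z
  have f_nonneg_nbrs: "0 \<le> f z" if y: "y \<in> S_plus s0" and z: "z \<in> nbrs s0 y" for y z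
  proof -
    obtain x1 x2 j where y_eq: "y = (x1, x2, j)"
      by (cases y)
    then obtain k l j' where z_eq: "z = (x1 + k, x2 + l, j')"
      and k: "k \<in> {-1,0,1}" and l: "l \<in> {-1,0,1}" and j': "j' \<in> {1..s0}"
      using z by (auto simp: nbrs_def)
    have "f z = of_int (level y) + of_int (w k l) + H j'"
      unfolding f_def z_eq y_eq level_shift[of x1 k x2 l j' j] by simp
    moreover have "0 \<le> real_of_int (level y)" "-1 \<le> real_of_int (w k l)"
      using level_nonneg[OF y] w_ge[OF k l] by simp_all
    ultimately show ?thesis
      using H_ge[OF j'] by linarith
  qed
  have f_nonneg: "0 \<le> f y" if "y \<in> S_plus s0" for y
  proof -
    have "snd (snd y) \<in> {1..s0}" "0 \<le> real_of_int (level y)"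
      using that level_nonneg[OF that] by (auto simp: S_plus_def)
    then show ?thesis
      using H_ge unfolding f_def by fastforce
  qed
  have f_drift: "\<epsilon> + (\<Sum>z\<in>nbrs s0 y \<inter> S_plus s0. trans s0 A y z * f z) \<le> f y"
    if y: "y \<in> S_plus s0" for y
  proof -
    obtain x1 x2 j where y_eq: "y = (x1, x2, j)" and j: "j \<in> {1..s0}"
      using y by (auto simp: S_plus_def)
    have "(\<Sum>z\<in>nbrs s0 y \<inter> S_plus s0. trans s0 A y z * f z) \<le> (\<Sum>z\<in>nbrs s0 y. trans s0 A y z * f z)"
      using f_nonneg_nbrs[OF y] trans_nonneg[OF A_nonneg]
      by (intro sum_mono2 finite_nbrs mult_nonneg_nonneg) auto
    also have "\<dots> = f y + (mean_incr s0 A w j + (P H j - H j))"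
      unfolding y_eq f_def sum_nbrs_level_phase[OF level_shift j] by simp
    also have "\<dots> \<le> f y - \<epsilon>"
      using H_drift[OF j] by simp
    finally show ?thesis
      by simp
  qed
  show ?thesis
    using occupation_measure_le_Lyapunov[OF trans_nonneg[OF A_nonneg] \<epsilon> f_nonneg f_drift y]
    by (simp add: f_def)
qed

lemma occupation_finite_if_mean_incr_neg:
  fixes level :: "state \<Rightarrow> int" and w :: "int \<Rightarrow> int \<Rightarrow> int"
  assumes level_shift: "\<And>x1 x2 j k l j'. level (x1 + k, x2 + l, j') = level (x1, x2, j) + w k l"
    and w_ge: "\<And>k l. k \<in> {-1,0,1} \<Longrightarrow> l \<in> {-1,0,1} \<Longrightarrow> -1 \<le> w k l"
    and level_nonneg: "\<And>y. y \<in> S_plus s0 \<Longrightarrow> 0 \<le> level y"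
    and drift_neg: "(\<Sum>j\<in>{1..s0}. \<pi> j * mean_incr s0 A w j) < 0"
    and y: "y \<in> S_plus s0"
  shows "(\<Sum>\<^sub>\<infinity>y'\<in>S_plus s0. qtilde s0 A y y') < \<infinity>"
proof -
  define a where "a = (\<Sum>j\<in>{1..s0}. \<pi> j * mean_incr s0 A w j)"
  define \<epsilon> where "\<epsilon> = - a / 2"
  have \<epsilon>: "0 < \<epsilon>"
    using drift_neg by (simp add: \<epsilon>_def a_def)
  have centered: "(\<Sum>j\<in>{1..s0}. \<pi> j * (mean_incr s0 A w j - a)) = 0"
    using pi_sum by (simp add: a_def right_diff_distrib sum_subtractf flip: sum_distrib_right)
  obtain h where h: "\<And>j. j \<in> {1..s0} \<Longrightarrow> P h j - h j \<le> \<epsilon> - (mean_incr s0 A w j - a)"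
    using approximate_poisson_solution[OF centered \<epsilon>] by metis
  \<comment> \<open>the shift makes the Lyapunov function nonnegative also one step outside S_plus\<close>
  define H where "H j = h j + (1 + (\<Sum>i\<in>{1..s0}. \<bar>h i\<bar>))" for j
  have H_ge: "1 \<le> H j" if "j \<in> {1..s0}" for j
    using member_le_sum[of j "{1..s0}" "\<lambda>i. \<bar>h i\<bar>"] that by (auto simp: H_def)
  have H_drift: "mean_incr s0 A w j + (P H j - H j) \<le> - \<epsilon>" if "j \<in> {1..s0}" for j
  proof -
    have "P H j = P h j + (1 + (\<Sum>i\<in>{1..s0}. \<bar>h i\<bar>))"
      unfolding H_def[abs_def] kernel_apply_add P_const[OF that] ..
    then show ?thesis
      using h[OF that] by (simp add: H_def \<epsilon>_def)
  qed
  have "(\<Sum>\<^sub>\<infinity>y'\<in>S_plus s0. qtilde s0 A y y') \<le> ennreal ((of_int (level y) + H (snd (snd y))) / \<epsilon>)"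
    by (rule occupation_measure_le_level_phase[OF level_shift w_ge level_nonneg H_ge H_drift \<epsilon> y])
  then show ?thesis
    by (rule le_less_trans) simp
qed

end

theorem proposition2p1:
  fixes s0 :: nat and A :: "int \<Rightarrow> int \<Rightarrow> nat \<Rightarrow> nat \<Rightarrow> real" and \<pi> :: "nat \<Rightarrow> real"
    and y :: state
  assumes s0_pos: "1 \<le> s0"
    and A_nonneg: "\<And>k l j j'. k \<in> {-1,0,1} \<Longrightarrow> l \<in> {-1,0,1} \<Longrightarrow> j \<in> {1..s0} \<Longrightarrow>
                     j' \<in> {1..s0} \<Longrightarrow> 0 \<le> A k l j j'"
    and A_stoch: "\<And>j. j \<in> {1..s0} \<Longrightarrow> (\<Sum>j'\<in>{1..s0}. Astar A j j') = 1"
    and pi_nonneg: "\<And>j. j \<in> {1..s0} \<Longrightarrow> 0 \<le> \<pi> j"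
    and pi_sum: "(\<Sum>j\<in>{1..s0}. \<pi> j) = 1"
    and pi_stat: "\<And>j'. j' \<in> {1..s0} \<Longrightarrow> (\<Sum>j\<in>{1..s0}. \<pi> j * Astar A j j') = \<pi> j'"
    and irred: "irreducible_chain s0 A"
    and aper: "aperiodic_chain s0 A"
    and drift: "drift1 s0 A \<pi> < 0 \<or> drift2 s0 A \<pi> < 0"
    and y_in: "y \<in> S_plus s0"
  shows "(\<Sum>\<^sub>\<infinity>y'\<in>S_plus s0. qtilde s0 A y y') < \<infinity>"
proof -
  interpret modulated_walk s0 A \<pi>
    using A_nonneg A_stoch pi_nonneg pi_sum pi_stat irred by unfold_locales
  from drift show ?thesis
  proof
    assume "drift1 s0 A \<pi> < 0"
    then show ?thesis
      using y_in unfolding drift1_eq_mean_incr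
      by (intro occupation_finite_if_mean_incr_neg[where level = "\<lambda>(x1, x2, j). x1" and w = "\<lambda>k l. k"])
        (auto simp: S_plus_def)
  next
    assume "drift2 s0 A \<pi> < 0"
    then show ?thesis
      using y_in unfolding drift2_eq_mean_incr
      by (intro occupation_finite_if_mean_incr_neg[where level = "\<lambda>(x1, x2, j). x2" and w = "\<lambda>k l. l"])
        (auto simp: S_plus_def)
  qed
qed

end
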